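(* Let $a,d,b,k\in\mathbb{P}$ with $b\geq 2$, $\gcd(a,d)=1$ and $a\geq k-1$, and let $$A=\left(a,\ ba+d,\ b^2a+\tfrac{b^2-1}{b-1}d,\ \dots,\ b^ka+\tfrac{b^k-1}{b-1}d\right).$$ Fix $0\leq r\leq a-1$ and for $m\in\mathbb{N}$ put $N_{dr}(m)=O(ma+r)\cdot a+(ma+r)d$. Then $N_{dr}(m)$ is (weakly) increasing in $m\in\mathbb{N}$, i.e. $N_{dr}(m+1)\ge N_{dr}(m)$ for all $m$. More precisely, if $(x_1,\dots,x_k)$ is the greedy presentation of $r$, then $$N_{dr}=\left(\sum_{i=1}^k x_i\right)a+r\big((b-1)a+d\big)=\left(\sum_{i=1}^k b^i x_i\right)a+rd.$$
   Context: $\mathbb{P}$ denotes the positive integers, $\mathbb{N}$ the nonnegative integers. $\langle A\rangle$ is the set of all $\mathbb{N}$-linear combinations of the entries of $A$. For an integer $j$, $N_j=\min\{s\in\langle A\rangle : s\equiv j\pmod a\}$. Let $B=(B_1,\dots,B_k)$ with $B_i=\frac{b^i-1}{b-1}$. For $M\in\mathbb{N}$, $O(M)=\min\{\sum_{i=1}^k b^i x_i : \sum_{i=1}^k B_i x_i=M,\ x_i\in\mathbb{N}\}$. The greedy presentation of $M\in\mathbb{N}$ is the tuple $(x_1,\dots,x_k)\in\mathbb{N}^k$ with $\sum_i B_i x_i=M$ obtained by the greedy algorithm (take $x_k$ maximal, then $x_{k-1}$ maximal for the remainder, etc.); equivalently it is the representation satisfying $x_k=\lfloor (b-1)M/(b^k-1)\rfloor$,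 $x_i\in\{0,1,\dots,b\}$ for $1\le i\le k-1$, and if $2\le i\le k-1$ and $x_i=b$ then $x_1=\cdots=x_{i-1}=0$. *)

theory Defs
  imports Main
begin

definition gen_semigroup :: "(nat \<Rightarrow> nat) \<Rightarrow> nat \<Rightarrow> nat set" where
  "gen_semigroup A n = {s. \<exists>c::nat \<Rightarrow> nat. s = (\<Sum>i\<le>n. c i * A i)}"

definition Apery_N :: "(nat \<Rightarrow> nat) \<Rightarrow> nat \<Rightarrow> int \<Rightarrow> nat" where
  "Apery_N A n j = (LEAST s. s \<in> gen_semigroup A n \<and> int s mod int (A 0) = j mod int (A 0))"

definition Bnum :: "nat \<Rightarrow> nat \<Rightarrow> nat" where
  "Bnum b i = (b ^ i - 1) div (b - 1)"

definition genA :: "nat \<Rightarrow> nat \<Rightarrow> nat \<Rightarrow> nat \<Rightarrow> nat" where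
  "genA a d b i = b ^ i * a + Bnum b i * d"

definition Opt :: "nat \<Rightarrow> nat \<Rightarrow> nat \<Rightarrow> nat" where
  "Opt b k M = (LEAST v. \<exists>x::nat \<Rightarrow> nat.
      (\<Sum>i=1..k. Bnum b i * x i) = M \<and> v = (\<Sum>i=1..k. b ^ i * x i))"

text \<open>Greedy algorithm: remainder after choosing x_k, ..., x_(k-n+1).\<close>
fun greedy_rem :: "nat \<Rightarrow> nat \<Rightarrow> nat \<Rightarrow> nat \<Rightarrow> nat" where
  "greedy_rem b k M 0 = M"
| "greedy_rem b k M (Suc n) = greedy_rem b k M n mod Bnum b (k - n)"

definition greedy :: "nat \<Rightarrow> nat \<Rightarrow> nat \<Rightarrow> nat \<Rightarrow> nat" where
  "greedy b k M i = greedy_rem b k M (k - i) div Bnum b i"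

end

theory Submission
  imports Defs "HOL-Number_Theory.Cong"
begin

(* Since b^i = (b - 1) B_i + 1, a presentation x of M costs sum b^i x_i = (b - 1) M + sum x_i,
   so O(M) - (b - 1) M is the least number of parts in a presentation of M by B_1, ..., B_k.
   Because B_(i+1) = b B_i + 1, the greedy presentation attains this minimum, and its number of
   parts drops by at most b - 1 when M grows by 1; hence O is monotone.  An element of <A> is
   (x_0 + sum b^i x_i) a + M d with M = sum B_i x_i; congruence to d r modulo a forces
   M = r (mod a), as gcd(a, d) = 1, so M >= r, and monotonicity of O makes O(r) a + r d the
   least such element. *)

lemma Bnum_0 [simp]: "Bnum b 0 = 0"
  by (simp add: Bnum_def)

lemma power_eq_Bnum:
  assumes "b \<ge> 2"
  shows "b ^ i = (b - 1) * Bnum b i + 1"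
proof -
  obtain c where c: "b = Suc c" "c > 0"
    using assms by (cases b) auto
  have "int (b ^ i) = int (c * (\<Sum>l<i. b ^ l) + 1)"
    using power_diff_1_eq[of "int b" i] c by simp
  then have "b ^ i = c * (\<Sum>l<i. b ^ l) + 1"
    by (simp only: of_nat_eq_iff)
  then show ?thesis
    using c by (simp add: Bnum_def)
qed

lemma Bnum_Suc:
  assumes "b \<ge> 2"
  shows "Bnum b (Suc i) = b * Bnum b i + 1"
proof -
  obtain c where c: "b = Suc c" "c > 0"
    using assms by (cases b) auto
  have "c * Bnum b (Suc i) + 1 = b * (c * Bnum b i + 1)"
    using power_eq_Bnum[OF assms, of i] power_eq_Bnum[OF assms, of "Suc i"] c by simp
  also have "\<dots> = c * (b * Bnum b i + 1) + 1"
    using c by (simp add: algebra_simps)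
  finally have "c * Bnum b (Suc i) = c * (b * Bnum b i + 1)"
    by simp
  then show ?thesis
    using c(2) by (simp only: mult_cancel_left) simp
qed

lemma Bnum_1: "b \<ge> 2 \<Longrightarrow> Bnum b 1 = 1"
  using Bnum_Suc[of b 0] by simp

lemma Bnum_Suc_pos: "b \<ge> 2 \<Longrightarrow> Bnum b (Suc i) > 0"
  by (simp add: Bnum_Suc)

lemma sum_power_eq_Bnum:
  assumes "b \<ge> 2"
  shows "(\<Sum>i\<in>I. b ^ i * x i) = (b - 1) * (\<Sum>i\<in>I. Bnum b i * x i) + (\<Sum>i\<in>I. x i)"
  by (simp add: power_eq_Bnum[OF assms] algebra_simps sum.distrib sum_distrib_left)

fun greedy_count :: "nat \<Rightarrow> nat \<Rightarrow> nat \<Rightarrow> nat" where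
  "greedy_count b 0 M = 0"
| "greedy_count b (Suc j) M = M div Bnum b (Suc j) + greedy_count b j (M mod Bnum b (Suc j))"

lemma greedy_count_0_right [simp]: "greedy_count b j 0 = 0"
  by (induction j) auto

lemma greedy_count_Suc_eq:
  assumes "b \<ge> 2" "M = q * Bnum b (Suc j) + u" "u < Bnum b (Suc j)"
  shows "greedy_count b (Suc j) M = q + greedy_count b j u"
  using assms Bnum_Suc_pos[OF assms(1), of j] by simp

lemma greedy_count_Suc_add_mult:
  assumes "b \<ge> 2"
  shows "greedy_count b (Suc j) (q * Bnum b (Suc j) + M) = q + greedy_count b (Suc j) M"
  using Bnum_Suc_pos[OF assms, of j] by simp

lemma greedy_count_mult_Bnum_le:
  assumes "b \<ge> 2"
  shows "greedy_count b j (b * Bnum b j) \<le> b"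
  using assms by (cases j) (auto simp: Bnum_Suc_pos)

declare greedy_count.simps(2) [simp del]

lemma greedy_count_le_Suc:
  assumes "b \<ge> 2"
  shows "greedy_count b j M \<le> greedy_count b j (Suc M) + (b - 1)"
proof (induction j arbitrary: M)
  case 0
  then show ?case by simp
next
  case (Suc j)
  define B where "B = Bnum b (Suc j)"
  have B_eq: "B = b * Bnum b j + 1"
    using Bnum_Suc[OF assms] by (simp add: B_def)
  have count: "greedy_count b (Suc j) N = q + greedy_count b j u"
    if "N = q * B + u" "u < B" for N q u
    using greedy_count_Suc_eq[OF assms] that by (simp add: B_def)
  define q t where "q = Suc M div B" and "t = Suc M mod B"
  have Suc_M: "Suc M = q * B + t" and "t < B"
    using B_eq by (simp_all only: q_def t_def div_mult_mod_eq) simp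
  show ?case
  proof (cases "t = 0")
    case True
    then have "q > 0" and M_eq: "M = (q - 1) * B + b * Bnum b j"
      using Suc_M B_eq by (cases q; simp add: algebra_simps)+
    have "greedy_count b (Suc j) M = (q - 1) + greedy_count b j (b * Bnum b j)"
      using count[OF M_eq] B_eq by simp
    moreover have "greedy_count b (Suc j) (Suc M) = q"
      using count[OF Suc_M \<open>t < B\<close>] True by simp
    ultimately show ?thesis
      using greedy_count_mult_Bnum_le[OF assms, of j] \<open>q > 0\<close> by simp
  next
    case False
    then have "M = q * B + (t - 1)"
      using Suc_M by simp
    then have "greedy_count b (Suc j) M = q + greedy_count b j (t - 1)"
      using \<open>t < B\<close> count by simp
    then show ?thesis
      using count[OF Suc_M \<open>t < B\<close>] Suc.IH[of "t - 1"] False by simp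
  qed
qed

lemma greedy_count_le_add:
  assumes "b \<ge> 2"
  shows "greedy_count b j M \<le> greedy_count b j (M + n) + (b - 1) * n"
proof (induction n)
  case 0
  then show ?case by simp
next
  case (Suc n)
  then show ?case
    using greedy_count_le_Suc[OF assms, of j "M + n"] by simp
qed

lemma greedy_count_add_next_Bnum:
  assumes "b \<ge> 2"
  shows "greedy_count b (Suc j) M < greedy_count b (Suc j) (M + Bnum b (Suc (Suc j)))"
proof -
  \<comment> \<open>B_(j+2) = b B_(j+1) + 1 adds b parts B_(j+1); the extra 1 saves at most b - 1 parts.\<close>
  define B where "B = Bnum b (Suc j)"
  have B_eq: "B = b * Bnum b j + 1" and B_next: "Bnum b (Suc (Suc j)) = b * B + 1"
    using Bnum_Suc[OF assms] by (simp_all add: B_def)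
  have count: "greedy_count b (Suc j) N = q + greedy_count b j u"
    if "N = q * B + u" "u < B" for N q u
    using greedy_count_Suc_eq[OF assms] that by (simp add: B_def)
  define q s where "q = M div B" and "s = M mod B"
  have M_eq: "M = q * B + s" and "s < B"
    using B_eq by (simp_all only: q_def s_def div_mult_mod_eq) simp
  show ?thesis
  proof (cases "Suc s < B")
    case True
    have "M + Bnum b (Suc (Suc j)) = (q + b) * B + Suc s"
      using M_eq B_next by (simp add: algebra_simps)
    then show ?thesis
      using count[OF M_eq \<open>s < B\<close>] count[OF _ True] greedy_count_le_Suc[OF assms, of j s] assms
      by simp
  next
    case False
    then have "s = b * Bnum b j"
      using \<open>s < B\<close> B_eq by simp
    moreover have "M + Bnum b (Suc (Suc j)) = (q + b + 1) * B + 0"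
      using M_eq B_next B_eq \<open>s = b * Bnum b j\<close> by (simp add: algebra_simps)
    ultimately show ?thesis
      using count[OF M_eq \<open>s < B\<close>] count[of _ "q + b + 1" 0] B_eq
        greedy_count_mult_Bnum_le[OF assms, of j] by simp
  qed
qed

lemma greedy_count_Suc_Suc_le:
  assumes "b \<ge> 2"
  shows "greedy_count b (Suc (Suc j)) M \<le> greedy_count b (Suc j) M"
proof (induction M rule: less_induct)
  case (less M)
  define B where "B = Bnum b (Suc (Suc j))"
  show ?case
  proof (cases "M < B")
    case True
    then show ?thesis
      using greedy_count_Suc_eq[OF assms, of M 0 "Suc j" M] by (simp add: B_def)
  next
    case False
    define M' where "M' = M - B"
    have M_eq: "M = 1 * B + M'" and "M' < M"
      using False Bnum_Suc_pos[OF assms, of "Suc j"] by (simp_all add: M'_def B_def)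
    have "greedy_count b (Suc (Suc j)) M = 1 + greedy_count b (Suc (Suc j)) M'"
      unfolding M_eq B_def by (rule greedy_count_Suc_add_mult[OF assms])
    also have "\<dots> \<le> 1 + greedy_count b (Suc j) M'"
      using less.IH[OF \<open>M' < M\<close>] by simp
    also have "\<dots> \<le> greedy_count b (Suc j) M"
      using greedy_count_add_next_Bnum[OF assms, of j M'] M_eq by (simp add: B_def add.commute)
    finally show ?thesis .
  qed
qed

lemma greedy_count_le_sum:
  assumes "b \<ge> 2"
  shows "greedy_count b j (\<Sum>i=1..j. Bnum b i * x i) \<le> (\<Sum>i=1..j. x i)"
proof (induction j)
  case 0
  then show ?case by simp
next
  case (Suc j)
  define M where "M = (\<Sum>i=1..j. Bnum b i * x i)"
  have "greedy_count b (Suc j) M \<le> (\<Sum>i=1..j. x i)"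
  proof (cases j)
    case 0
    then show ?thesis by (simp add: M_def)
  next
    case (Suc j')
    then show ?thesis
      using greedy_count_Suc_Suc_le[OF assms, of j' M] Suc.IH by (simp add: M_def)
  qed
  moreover have "(\<Sum>i=1..Suc j. Bnum b i * x i) = x (Suc j) * Bnum b (Suc j) + M"
    by (simp add: M_def)
  ultimately show ?case
    using greedy_count_Suc_add_mult[OF assms, of j "x (Suc j)" M] by (simp add: ac_simps)
qed

lemma greedy_rem_Suc_Suc:
  "greedy_rem b (Suc j) M (Suc n) = greedy_rem b j (M mod Bnum b (Suc j)) n"
  by (induction n) auto

lemma greedy_Suc:
  assumes "i \<le> j"
  shows "greedy b (Suc j) M i = greedy b j (M mod Bnum b (Suc j)) i"
  using greedy_rem_Suc_Suc[of b j M "j - i"] assms by (simp add: greedy_def Suc_diff_le)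

lemma greedy_Suc_top: "greedy b (Suc j) M (Suc j) = M div Bnum b (Suc j)"
  by (simp add: greedy_def)

lemma sum_greedy: "(\<Sum>i=1..j. greedy b j M i) = greedy_count b j M"
proof (induction j arbitrary: M)
  case 0
  then show ?case by simp
next
  case (Suc j)
  have "(\<Sum>i=1..j. greedy b (Suc j) M i) = (\<Sum>i=1..j. greedy b j (M mod Bnum b (Suc j)) i)"
    by (intro sum.cong) (simp_all add: greedy_Suc)
  then show ?case
    using Suc.IH by (simp add: greedy_Suc_top greedy_count.simps(2))
qed

lemma sum_Bnum_greedy:
  assumes "b \<ge> 2" "j > 0"
  shows "(\<Sum>i=1..j. Bnum b i * greedy b j M i) = M"
  using assms(2)
proof (induction j arbitrary: M)
  case 0
  then show ?case by simp
next
  case (Suc j)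
  have "(\<Sum>i=1..j. Bnum b i * greedy b (Suc j) M i)
      = (\<Sum>i=1..j. Bnum b i * greedy b j (M mod Bnum b (Suc j)) i)"
    by (intro sum.cong) (simp_all add: greedy_Suc)
  also have "\<dots> = M mod Bnum b (Suc j)"
    using Suc.IH Bnum_1[OF assms(1)] by (cases j) simp_all
  finally show ?case
    by (simp add: greedy_Suc_top)
qed

lemma Opt_le_sum:
  "(\<Sum>i=1..k. Bnum b i * x i) = M \<Longrightarrow> Opt b k M \<le> (\<Sum>i=1..k. b ^ i * x i)"
  unfolding Opt_def by (rule Least_le) blast

lemma Opt_eq_sum_greedy:
  assumes "b \<ge> 2" "k > 0"
  shows "Opt b k M = (\<Sum>i=1..k. b ^ i * greedy b k M i)"
  unfolding Opt_def
proof (rule Least_equality)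
  show "\<exists>x. (\<Sum>i=1..k. Bnum b i * x i) = M \<and>
      (\<Sum>i=1..k. b ^ i * greedy b k M i) = (\<Sum>i=1..k. b ^ i * x i)"
    using sum_Bnum_greedy[OF assms] by blast
next
  fix v
  assume "\<exists>x. (\<Sum>i=1..k. Bnum b i * x i) = M \<and> v = (\<Sum>i=1..k. b ^ i * x i)"
  then obtain x where "(\<Sum>i=1..k. Bnum b i * x i) = M" "v = (\<Sum>i=1..k. b ^ i * x i)"
    by blast
  then show "(\<Sum>i=1..k. b ^ i * greedy b k M i) \<le> v"
    using greedy_count_le_sum[OF assms(1), of k x]
    unfolding sum_power_eq_Bnum[OF assms(1)] sum_Bnum_greedy[OF assms] sum_greedy by simp
qed

lemma Opt_eq_greedy_count:
  assumes "b \<ge> 2" "k > 0"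
  shows "Opt b k M = (b - 1) * M + greedy_count b k M"
  unfolding Opt_eq_sum_greedy[OF assms] sum_power_eq_Bnum[OF assms(1)] sum_Bnum_greedy[OF assms]
    sum_greedy ..

lemma Opt_mono:
  assumes "b \<ge> 2" "k > 0" "M \<le> M'"
  shows "Opt b k M \<le> Opt b k M'"
proof -
  obtain n where "M' = M + n"
    using le_Suc_ex[OF assms(3)] by blast
  have "Opt b k M \<le> (b - 1) * M + (greedy_count b k (M + n) + (b - 1) * n)"
    using greedy_count_le_add[OF assms(1), of k M n] by (simp add: Opt_eq_greedy_count[OF assms(1,2)])
  also have "\<dots> = Opt b k M'"
    using \<open>M' = M + n\<close> by (simp add: Opt_eq_greedy_count[OF assms(1,2)] add_mult_distrib2)
  finally show ?thesis .
qed

lemma sum_mult_genA: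
  "(\<Sum>i\<le>k. c i * genA a d b i)
     = (c 0 + (\<Sum>i=1..k. b ^ i * c i)) * a + (\<Sum>i=1..k. Bnum b i * c i) * d"
proof -
  have "(\<Sum>i\<le>k. c i * genA a d b i) = c 0 * a + (\<Sum>i=1..k. c i * genA a d b i)"
    by (simp add: atMost_atLeast0 sum.atLeast_Suc_atMost genA_def)
  also have "(\<Sum>i=1..k. c i * genA a d b i)
      = (\<Sum>i=1..k. (b ^ i * c i) * a + (Bnum b i * c i) * d)"
    by (simp add: genA_def algebra_simps)
  also have "\<dots> = (\<Sum>i=1..k. b ^ i * c i) * a + (\<Sum>i=1..k. Bnum b i * c i) * d"
    by (simp only: sum.distrib sum_distrib_right)
  finally show ?thesis
    by (simp add: algebra_simps)
qed

lemma gen_semigroup_genA_iff: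
  assumes "b \<ge> 2" "k > 0"
  shows "s \<in> gen_semigroup (genA a d b) k \<longleftrightarrow> (\<exists>n M. s = (n + Opt b k M) * a + M * d)"
proof
  assume "s \<in> gen_semigroup (genA a d b) k"
  then obtain c where "s = (\<Sum>i\<le>k. c i * genA a d b i)"
    by (auto simp: gen_semigroup_def)
  moreover define M where "M = (\<Sum>i=1..k. Bnum b i * c i)"
  moreover have "Opt b k M \<le> (\<Sum>i=1..k. b ^ i * c i)"
    using Opt_le_sum M_def by simp
  ultimately have "s = (c 0 + (\<Sum>i=1..k. b ^ i * c i) - Opt b k M + Opt b k M) * a + M * d"
    by (simp add: sum_mult_genA)
  then show "\<exists>n M. s = (n + Opt b k M) * a + M * d"
    by blast
next
  assume "\<exists>n M. s = (n + Opt b k M) * a + M * d"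
  then obtain n M where s: "s = (n + Opt b k M) * a + M * d"
    by blast
  define c where "c i = (if i = 0 then n else greedy b k M i)" for i
  have "(\<Sum>i=1..k. b ^ i * c i) = (\<Sum>i=1..k. b ^ i * greedy b k M i)"
    by (intro sum.cong) (simp_all add: c_def)
  then have "(\<Sum>i=1..k. b ^ i * c i) = Opt b k M"
    by (simp only: Opt_eq_sum_greedy[OF assms])
  have "(\<Sum>i=1..k. Bnum b i * c i) = (\<Sum>i=1..k. Bnum b i * greedy b k M i)"
    by (intro sum.cong) (simp_all add: c_def)
  then have "(\<Sum>i=1..k. Bnum b i * c i) = M"
    by (simp only: sum_Bnum_greedy[OF assms])
  with \<open>(\<Sum>i=1..k. b ^ i * c i) = Opt b k M\<close> have "s = (\<Sum>i\<le>k. c i * genA a d b i)"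
    by (simp add: s sum_mult_genA c_def)
  then show "s \<in> gen_semigroup (genA a d b) k"
    by (auto simp: gen_semigroup_def)
qed

lemma Apery_N_genA:
  assumes "b \<ge> 2" "k > 0" "coprime a d" "r < a"
  shows "Apery_N (genA a d b) k (int (d * r)) = Opt b k r * a + r * d"
  unfolding Apery_N_def
proof (rule Least_equality)
  have "genA a d b 0 = a"
    by (simp add: genA_def)
  then show "Opt b k r * a + r * d \<in> gen_semigroup (genA a d b) k \<and>
      int (Opt b k r * a + r * d) mod int (genA a d b 0) = int (d * r) mod int (genA a d b 0)"
    using gen_semigroup_genA_iff[OF assms(1,2)] by (metis add_0 mult.commute mod_mult_self3 of_nat_mod)
next
  fix s
  assume s_mem: "s \<in> gen_semigroup (genA a d b) k \<and>
      int s mod int (genA a d b 0) = int (d * r) mod int (genA a d b 0)"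
  then obtain n M where s: "s = (n + Opt b k M) * a + M * d"
    using gen_semigroup_genA_iff[OF assms(1,2)] by blast
  have "int (s mod a) = int (d * r mod a)"
    using s_mem by (simp only: of_nat_mod) (simp add: genA_def)
  then have "s mod a = d * r mod a"
    by (simp only: of_nat_eq_iff)
  then have "[M * d = r * d] (mod a)"
    by (simp add: s cong_def mult.commute)
  then have "[M = r] (mod a)"
    using cong_mult_rcancel_nat assms(3) by (metis coprime_commute)
  then have "r \<le> M"
    using assms(4) by (metis cong_def mod_less mod_less_eq_dividend)
  then show "Opt b k r * a + r * d \<le> s"
    unfolding s using Opt_mono[OF assms(1,2), of r M] by (intro add_le_mono mult_le_mono) auto
qed

theorem lemma3p3:
  fixes a d b k r :: nat
  assumes "a > 0" and "d > 0" and "b \<ge> 2" and "k > 0"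
    and "coprime a d" and "a + 1 \<ge> k"
    and "r \<le> a - 1"
  shows "(\<forall>m::nat. Opt b k (m * a + r) * a + (m * a + r) * d
                 \<le> Opt b k ((m + 1) * a + r) * a + ((m + 1) * a + r) * d)
       \<and> Apery_N (genA a d b) k (int (d * r))
           = (\<Sum>i=1..k. greedy b k r i) * a + r * ((b - 1) * a + d)
       \<and> Apery_N (genA a d b) k (int (d * r))
           = (\<Sum>i=1..k. b ^ i * greedy b k r i) * a + r * d"
proof (intro conjI allI)
  fix m
  have "Opt b k (m * a + r) \<le> Opt b k ((m + 1) * a + r)"
    using Opt_mono[OF assms(3,4)] by simp
  then show "Opt b k (m * a + r) * a + (m * a + r) * d
      \<le> Opt b k ((m + 1) * a + r) * a + ((m + 1) * a + r) * d"
    by (intro add_le_mono mult_le_mono) auto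
next
  have N_eq: "Apery_N (genA a d b) k (int (d * r)) = Opt b k r * a + r * d"
    using Apery_N_genA[OF assms(3,4,5)] assms(1,7) by simp
  then show "Apery_N (genA a d b) k (int (d * r))
      = (\<Sum>i=1..k. greedy b k r i) * a + r * ((b - 1) * a + d)"
    unfolding sum_greedy Opt_eq_greedy_count[OF assms(3,4)] by (simp add: algebra_simps)
  from N_eq show "Apery_N (genA a d b) k (int (d * r))
      = (\<Sum>i=1..k. b ^ i * greedy b k r i) * a + r * d"
    by (simp only: Opt_eq_sum_greedy[OF assms(3,4)])
qed

end
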